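(* Let $P \in \mathbb{C}[X]$ be a polynomial of degree $d \ge 1$ with exactly $r$ distinct complex roots. Let $G=(V,E)$ be a finite simple undirected graph (no loops, no multiple edges) whose vertex set $V$ is a subset of the set of distinct complex roots of $P$. Then $$ \prod_{\{v_i, v_j\} \in E} |v_i - v_j| \ \ge \ |\mathrm{sDisc}_{d-r}(P)|^{1/2} \, \mathrm{M}(P)^{-(r-1)} \, \Big(\frac{r}{\sqrt{3}}\Big)^{-\#E} \,r^{-r/2} \, \Big(\frac13\Big)^{\min \{d,\, 2d-2r\}/6}, $$ where the product runs over the edges of $G$ (each edge counted once) and $\#E$ is the number of edges.
   Context: Write $P = a_d \prod_{j=1}^r (X - v_j)^{m_j}$ with $a_d \ne 0$, $v_1,\dots,v_r$ pairwise distinct, $m_j \in \mathbb{N}$, $\sum_j m_j = d$; let $x_1,\dots,x_d$ be the roots of $P$ listed with multiplicity. The Mahler measure is $\mathrm{M}(P) = |a_d| \prod_{i=1}^d \max\{1,|x_i|\}$. For $0 \le k < d$, the $k$-th subdiscriminant is $\mathrm{sDisc}_k(P) = a_d^{2(d-k)-2} \sum_{I \subset \{1,\dots,d\},\ |I| = d-k} \ \prod_{i,j \in I,\ i<j} (x_i - x_j)^2$. In particular $|\mathrm{sDisc}_{d-r}(P)|^{1/2} = |a_d|^{r-1} \big(\prod_{j=1}^r m_j\big)^{1/2} \prod_{1\le i<j\le r}|v_i - v_j|$, and when $P$ is square-free ($r=d$) $\mathrm{sDisc}_0(P)$ is the discriminant of $P$ up to sign. *)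

theory Defs
  imports "HOL-Computational_Algebra.Polynomial" Complex_Main
begin

text \<open>For P of degree d >= 1 such a list exists
  (fundamental theorem of algebra) and is unique up to permutation; all
  quantities below are symmetric in the roots, hence well defined.\<close>
definition root_list :: "complex poly \<Rightarrow> complex list" where
  "root_list P = (SOME xs. P = smult (lead_coeff P) (\<Prod>x\<leftarrow>xs. [:- x, 1:]))"

definition mahler_measure :: "complex poly \<Rightarrow> real" where
  "mahler_measure P = cmod (lead_coeff P) * (\<Prod>x\<leftarrow>root_list P. max 1 (cmod x))"

definition sDisc :: "complex poly \<Rightarrow> nat \<Rightarrow> complex" where
  "sDisc P k = (let d = degree P; xs = root_list P in
     lead_coeff P ^ (2 * (d - k) - 2) *
     (\<Sum>I\<in>{I. I \<subseteq> {0..<d} \<and> card I = d - k}.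
        \<Prod>(i, j)\<in>{(i, j). i \<in> I \<and> j \<in> I \<and> i < j}. (xs ! i - xs ! j) ^ 2))"

definition edge_length :: "complex set \<Rightarrow> real" where
  "edge_length e = (THE l. \<exists>u v. e = {u, v} \<and> l = cmod (u - v))"

end

theory Submission
  imports Defs "Jordan_Normal_Form.Determinant" "HOL-Computational_Algebra.Fundamental_Theorem_Algebra"
begin

text \<open>Order the distinct roots \<open>v\<^sub>0, \<dots>, v\<^sub>r\<^sub>-\<^sub>1\<close> of \<open>P\<close> by increasing modulus and let
  \<open>T\<^sub>i\<close> be the set of earlier neighbours of \<open>v\<^sub>i\<close> in the graph. The matrix whose row \<open>i\<close> holds
  the divided differences of the monomials \<open>z\<^sup>k\<close>, \<open>k < r\<close>, at \<open>v\<^sub>i\<close> and the \<open>v\<^sub>j\<close> with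
  \<open>j \<in> T\<^sub>i\<close> becomes triangular after a unitriangular change to the Newton basis; its determinant
  is the product of all differences \<open>v\<^sub>i - v\<^sub>l\<close>, \<open>l < i\<close>, divided by the product over the edges.
  A divided difference of \<open>z\<^sup>k\<close> over \<open>s + 1\<close> nodes of modulus at most \<open>R \<ge> 1\<close> is at most
  \<open>(k choose s) R\<^sup>k\<^sup>-\<^sup>s\<close> in modulus, and the sum of \<open>(k choose s)\<^sup>2\<close> over \<open>k < r\<close> is at most
  \<open>r\<^sup>2\<^sup>s\<^sup>+\<^sup>1 / 3\<^sup>s\<close>, so Hadamard's inequality bounds the product of all root differences by the
  product of the edge lengths times \<open>(\<Prod>\<^sub>i max 1 |v\<^sub>i|)\<^sup>r\<^sup>-\<^sup>1\<close>, \<open>r\<^sup>r\<^sup>/\<^sup>2\<close> and a factor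
  \<open>r / sqrt 3\<close> per edge. On the other side only the index sets picking every distinct root exactly
  once contribute to \<open>sDisc\<^sub>d\<^sub>-\<^sub>r(P)\<close>; there are at most \<open>\<Prod>\<^sub>j m\<^sub>j\<close> of them, and
  \<open>(\<Prod>\<^sub>j m\<^sub>j)\<^sup>3\<close> is at most both \<open>3\<^sup>d\<close> and \<open>9\<^sup>d\<^sup>-\<^sup>r\<close>. Finally
  \<open>|a\<^sub>d| \<Prod>\<^sub>i max 1 |v\<^sub>i| \<le> M(P)\<close>.\<close>

section \<open>Divided differences\<close>

text \<open>For pairwise distinct nodes this is the divided difference \<open>f[x\<^sub>0, \<dots>, x\<^sub>k]\<close>; the
  recursion removes the second resp. the first node, which is legitimate by symmetry.\<close>

fun divided_diff :: "'a::field list \<Rightarrow> ('a \<Rightarrow> 'a) \<Rightarrow> 'a" where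
  "divided_diff [] f = 0"
| "divided_diff [x] f = f x"
| "divided_diff (x # y # ys) f = (divided_diff (x # ys) f - divided_diff (y # ys) f) / (x - y)"

lemma divided_diff_add: "divided_diff xs (\<lambda>z. f z + g z) = divided_diff xs f + divided_diff xs g"
  by (induction xs f rule: divided_diff.induct) (simp_all add: add_divide_distrib[symmetric] algebra_simps)

lemma divided_diff_cmult: "divided_diff xs (\<lambda>z. c * f z) = c * divided_diff xs f"
  by (induction xs f rule: divided_diff.induct) (simp_all add: right_diff_distrib)

lemma divided_diff_eq_0: "(\<And>z. z \<in> set xs \<Longrightarrow> f z = 0) \<Longrightarrow> divided_diff xs f = 0"
  by (induction xs f rule: divided_diff.induct) auto

lemma divided_diff_sum: "divided_diff xs (\<lambda>z. \<Sum>j\<in>A. g j z) = (\<Sum>j\<in>A. divided_diff xs (g j))"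
  by (induction A rule: infinite_finite_induct) (simp_all add: divided_diff_eq_0 divided_diff_add)

lemma divided_diff_cong: "(\<And>z. z \<in> set xs \<Longrightarrow> f z = g z) \<Longrightarrow> divided_diff xs f = divided_diff xs g"
  by (induction xs f rule: divided_diff.induct) auto

lemma divided_diff_const: "divided_diff (x # y # ys) (\<lambda>_. c) = 0"
proof (induction ys arbitrary: x y)
  case (Cons z zs)
  then show ?case by (simp only: divided_diff.simps(3)) simp
qed simp

lemma divided_diff_vanishing_on_tail:
  assumes "distinct (x # ys)" "\<And>y. y \<in> set ys \<Longrightarrow> f y = 0"
  shows "divided_diff (x # ys) f = f x / (\<Prod>y\<leftarrow>ys. x - y)"
  using assms
proof (induction ys)
  case (Cons y ys)
  have "divided_diff (y # ys) f = 0"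
    by (rule divided_diff_eq_0) (use Cons.prems in auto)
  moreover have "divided_diff (x # ys) f = f x / (\<Prod>y\<leftarrow>ys. x - y)"
    by (rule Cons.IH) (use Cons.prems in auto)
  ultimately show ?case by (simp add: field_simps)
qed simp

lemma divided_diff_times_var:
  assumes "distinct (x # y # ys)"
  shows "divided_diff (x # y # ys) (\<lambda>z. z * f z) = x * divided_diff (x # y # ys) f + divided_diff (y # ys) f"
  using assms
proof (induction ys arbitrary: x y)
  case Nil
  then have "x - y \<noteq> 0" by auto
  then show ?case by (simp add: field_simps)
next
  case (Cons z zs)
  have "x - y \<noteq> 0" using Cons.prems by auto
  then have alg: "(x * a + c - (y * b + c)) / (x - y) = x * ((a - b) / (x - y)) + b" for a b c
    by (simp add: field_simps)
  have "divided_diff (x # z # zs) (\<lambda>z. z * f z) = x * divided_diff (x # z # zs) f + divided_diff (z # zs) f"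
   and "divided_diff (y # z # zs) (\<lambda>z. z * f z) = y * divided_diff (y # z # zs) f + divided_diff (z # zs) f"
    by (rule Cons.IH; use Cons.prems in auto)+
  then show ?case by (simp only: divided_diff.simps(3) alg)
qed

lemma binomial_times_power_shift:
  "R * (real (k choose Suc s) * R ^ (k - Suc s)) = real (k choose Suc s) * R ^ (k - s)"
proof (cases "Suc s \<le> k")
  case True
  then have "k - s = Suc (k - Suc s)" by simp
  then show ?thesis by simp
qed (simp add: binomial_eq_0)

lemma norm_divided_diff_power_le:
  fixes x :: "'a::real_normed_field"
  assumes "distinct (x # ys)" "\<And>z. z \<in> set (x # ys) \<Longrightarrow> norm z \<le> R"
  shows "norm (divided_diff (x # ys) (\<lambda>z. z ^ k)) \<le> real (k choose length ys) * R ^ (k - length ys)"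
  using assms
proof (induction k arbitrary: x ys)
  case 0
  then show ?case by (cases ys) (simp_all del: divided_diff.simps(3) add: divided_diff_const)
next
  case (Suc k)
  show ?case
  proof (cases ys)
    case Nil
    then have "norm x \<le> R" using Suc.prems by auto
    then have "norm (x ^ Suc k) \<le> R ^ Suc k" by (metis norm_power norm_ge_zero power_mono)
    then show ?thesis using Nil by simp
  next
    case (Cons y ys')
    let ?s = "length ys'"
    have "norm x \<le> R" using Suc.prems by simp
    then have R: "0 \<le> R" "norm x \<le> R" using norm_ge_zero[of x] by linarith+
    have "divided_diff (x # ys) (\<lambda>z. z ^ Suc k)
        = x * divided_diff (x # ys) (\<lambda>z. z ^ k) + divided_diff (y # ys') (\<lambda>z. z ^ k)"
      using divided_diff_times_var[of x y ys' "\<lambda>z. z ^ k"] Suc.prems Cons by simp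
    then have "norm (divided_diff (x # ys) (\<lambda>z. z ^ Suc k))
        \<le> norm x * norm (divided_diff (x # ys) (\<lambda>z. z ^ k)) + norm (divided_diff (y # ys') (\<lambda>z. z ^ k))"
      by (metis norm_mult norm_triangle_ineq)
    also have "\<dots> \<le> R * (real (k choose Suc ?s) * R ^ (k - Suc ?s)) + real (k choose ?s) * R ^ (k - ?s)"
      using Suc.IH[of x ys] Suc.IH[of y ys'] Suc.prems Cons R
      by (intro add_mono mult_mono) auto
    also have "R * (real (k choose Suc ?s) * R ^ (k - Suc ?s)) = real (k choose Suc ?s) * R ^ (k - ?s)"
      by (rule binomial_times_power_shift)
    also have "real (k choose Suc ?s) * R ^ (k - ?s) + real (k choose ?s) * R ^ (k - ?s)
        = real (Suc k choose length ys) * R ^ (Suc k - length ys)"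
      using Cons by (simp add: algebra_simps)
    finally show ?thesis by simp
  qed
qed

section \<open>Hadamard's inequality\<close>

definition cinner :: "nat \<Rightarrow> (nat \<Rightarrow> complex) \<Rightarrow> (nat \<Rightarrow> complex) \<Rightarrow> complex" where
  "cinner n a b = (\<Sum>j<n. a j * cnj (b j))"

definition csqnorm :: "nat \<Rightarrow> (nat \<Rightarrow> complex) \<Rightarrow> real" where
  "csqnorm n a = (\<Sum>j<n. (cmod (a j))\<^sup>2)"

lemma cinner_self: "cinner n a a = complex_of_real (csqnorm n a)"
  unfolding cinner_def csqnorm_def by (simp only: of_real_sum complex_norm_square)

lemma cinner_commute: "cinner n b a = cnj (cinner n a b)"
  unfolding cinner_def by (simp add: mult.commute)

lemma csqnorm_nonneg: "0 \<le> csqnorm n a"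
  unfolding csqnorm_def by (simp add: sum_nonneg)

lemma cinner_add_left: "cinner n (\<lambda>j. a j + b j) c = cinner n a c + cinner n b c"
  unfolding cinner_def by (simp add: distrib_right sum.distrib)

lemma cinner_add_right: "cinner n c (\<lambda>j. a j + b j) = cinner n c a + cinner n c b"
  unfolding cinner_def by (simp add: distrib_left sum.distrib)

lemma cinner_sum_left: "cinner n (\<lambda>j. \<Sum>l\<in>L. d l * b l j) c = (\<Sum>l\<in>L. d l * cinner n (b l) c)"
  unfolding cinner_def by (simp add: sum_distrib_left sum_distrib_right mult.assoc sum.swap[of _ L])

lemma cinner_sum_right: "cinner n c (\<lambda>j. \<Sum>l\<in>L. d l * b l j) = (\<Sum>l\<in>L. cnj (d l) * cinner n c (b l))"
  unfolding cinner_def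
  by (simp add: cnj_sum sum_distrib_left sum_distrib_right mult.assoc mult.left_commute sum.swap[of _ L])

lemma cinner_eq_0_if_csqnorm_eq_0: "csqnorm n a = 0 \<Longrightarrow> cinner n b a = 0"
  unfolding csqnorm_def cinner_def by (simp add: sum_nonneg_eq_0_iff)

lemma real_sqrt_prod: "sqrt (prod f A) = (\<Prod>x\<in>A. sqrt (f x))"
  by (induction A rule: infinite_finite_induct) (simp_all add: real_sqrt_mult)

interpretation cnj_hom: comm_ring_hom cnj
  by unfold_locales auto

lemma hadamard_orthogonal_rows:
  assumes "\<And>i l. i < n \<Longrightarrow> l < n \<Longrightarrow> i \<noteq> l \<Longrightarrow> cinner n (f i) (f l) = 0"
  shows "cmod (det (mat n n (\<lambda>(i,j). f i j))) = (\<Prod>i<n. sqrt (csqnorm n (f i)))"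
proof -
  define A where "A = mat n n (\<lambda>(i,j). f i j)"
  define B where "B = A * transpose_mat (map_mat cnj A)"
  have A: "A \<in> carrier_mat n n" and AH: "transpose_mat (map_mat cnj A) \<in> carrier_mat n n"
    and B: "B \<in> carrier_mat n n"
    unfolding A_def B_def by auto
  have B_entry: "B $$ (i,l) = cinner n (f i) (f l)" if "i < n" "l < n" for i l
    using that unfolding B_def A_def cinner_def
    by (simp add: scalar_prod_def row_def col_def atLeast0LessThan)
  have "upper_triangular B"
    by (rule upper_triangularI) (use B_entry assms B in auto)
  then have "det B = prod_list (diag_mat B)"
    by (rule det_upper_triangular[OF _ B])
  also have "\<dots> = (\<Prod>i = 0..<n. B $$ (i,i))"
    using B by (simp add: prod_list_diag_prod)
  also have "\<dots> = (\<Prod>i<n. complex_of_real (csqnorm n (f i)))"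
    by (rule prod.cong) (auto simp: B_entry cinner_self atLeast0LessThan)
  finally have "det B = complex_of_real (\<Prod>i<n. csqnorm n (f i))"
    by simp
  moreover have "det B = det A * det (transpose_mat (map_mat cnj A))"
    unfolding B_def by (rule det_mult[OF A AH])
  moreover have "det (transpose_mat (map_mat cnj A)) = cnj (det A)"
    using det_transpose[of "map_mat cnj A" n] A by (simp add: cnj_hom.hom_det)
  ultimately have "complex_of_real ((cmod (det A))\<^sup>2) = complex_of_real (\<Prod>i<n. csqnorm n (f i))"
    using complex_norm_square[of "det A"] by simp
  then have "(cmod (det A))\<^sup>2 = (\<Prod>i<n. csqnorm n (f i))"
    using of_real_eq_iff by blast
  then have "cmod (det A) = sqrt (\<Prod>i<n. csqnorm n (f i))"
    by (metis norm_ge_zero real_sqrt_unique)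
  then show ?thesis
    unfolding A_def by (simp add: real_sqrt_prod)
qed

lemma det_add_linear_combination_to_row:
  assumes k: "k < n" and L: "finite L" "L \<subseteq> {..<n} - {k}"
  shows "det (mat n n (\<lambda>(i,j). if i = k then f k j + (\<Sum>l\<in>L. c l * f l j) else f i j)) =
         det (mat n n (\<lambda>(i,j). f i j))"
  using L
proof (induction L rule: finite_induct)
  case empty
  have "mat n n (\<lambda>(i,j). if i = k then f k j + (\<Sum>l\<in>{}. c l * f l j) else f i j) = mat n n (\<lambda>(i,j). f i j)"
    by (rule eq_matI) auto
  then show ?case by simp
next
  case (insert x F)
  define M where "M = mat n n (\<lambda>(i,j). if i = k then f k j + (\<Sum>l\<in>F. c l * f l j) else f i j)"
  have x: "x < n" "x \<noteq> k" using insert.prems by auto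
  have "mat n n (\<lambda>(i,j). if i = k then f k j + (\<Sum>l\<in>insert x F. c l * f l j) else f i j) = addrow (c x) k x M"
    unfolding M_def mat_addrow_def using insert.hyps x by (intro eq_matI) (auto simp: algebra_simps)
  also have "det \<dots> = det M" by (rule det_addrow[OF x(1)]) (use x M_def in auto)
  also have "\<dots> = det (mat n n (\<lambda>(i,j). f i j))"
    unfolding M_def by (rule insert.IH) (use insert.prems in auto)
  finally show ?case .
qed

text \<open>One Gram--Schmidt step: subtracting from row \<open>k\<close> its projections onto the orthogonal
  rows \<open>0, \<dots>, k - 1\<close> keeps the determinant and does not increase the norm of row \<open>k\<close>.\<close>

lemma orthogonalize_row:
  fixes f :: "nat \<Rightarrow> nat \<Rightarrow> complex"
  assumes k: "k < n" and orth: "\<And>i l. i < k \<Longrightarrow> l < k \<Longrightarrow> i \<noteq> l \<Longrightarrow> cinner n (f i) (f l) = 0"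
  obtains g where "det (mat n n (\<lambda>(i,j). g i j)) = det (mat n n (\<lambda>(i,j). f i j))"
    and "\<And>i l. i \<le> k \<Longrightarrow> l \<le> k \<Longrightarrow> i \<noteq> l \<Longrightarrow> cinner n (g i) (g l) = 0"
    and "\<And>i. csqnorm n (g i) \<le> csqnorm n (f i)"
proof -
  define c where "c l = cinner n (f k) (f l) / cinner n (f l) (f l)" for l
  define u where "u j = (\<Sum>l<k. c l * f l j)" for j
  define gk where "gk j = f k j + (\<Sum>l<k. (- c l) * f l j)" for j
  define g where "g i = (if i = k then gk else f i)" for i
  have "det (mat n n (\<lambda>(i,j). g i j))
      = det (mat n n (\<lambda>(i,j). if i = k then f k j + (\<Sum>l<k. (- c l) * f l j) else f i j))"
    by (rule arg_cong[where f = det], rule eq_matI) (auto simp: g_def gk_def)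
  also have "\<dots> = det (mat n n (\<lambda>(i,j). f i j))"
    by (rule det_add_linear_combination_to_row) (use k in auto)
  finally have det_eq: "det (mat n n (\<lambda>(i,j). g i j)) = det (mat n n (\<lambda>(i,j). f i j))" .
  have gk_orth: "cinner n gk (f l) = 0" if l: "l < k" for l
  proof -
    have "cinner n gk (f l) = cinner n (f k) (f l) + (\<Sum>l'<k. (- c l') * cinner n (f l') (f l))"
      unfolding gk_def cinner_add_left cinner_sum_left ..
    also have "(\<Sum>l'<k. (- c l') * cinner n (f l') (f l)) = (- c l) * cinner n (f l) (f l)"
      by (subst sum.remove[of "{..<k}" l]) (use l orth in \<open>auto intro!: sum.neutral\<close>)
    finally show ?thesis
      using cinner_eq_0_if_csqnorm_eq_0[of n "f l" "f k"] by (auto simp: c_def cinner_self)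
  qed
  have g_orth: "cinner n (g i) (g l) = 0" if "i \<le> k" "l \<le> k" "i \<noteq> l" for i l
    using that gk_orth orth cinner_commute[of n "f i" gk] by (auto simp: g_def nat_less_le)
  have "cinner n gk u = 0"
    unfolding u_def cinner_sum_right by (simp add: gk_orth)
  moreover have "f k = (\<lambda>j. gk j + u j)"
    by (simp add: gk_def u_def sum_negf)
  ultimately have "complex_of_real (csqnorm n (f k)) = complex_of_real (csqnorm n gk + csqnorm n u)"
    using cinner_commute[of n u gk]
    by (simp add: cinner_self[symmetric] cinner_add_left cinner_add_right)
  then have "csqnorm n (f k) = csqnorm n gk + csqnorm n u"
    using of_real_eq_iff by blast
  then have "csqnorm n gk \<le> csqnorm n (f k)"
    using csqnorm_nonneg[of n u] by simp
  then have "csqnorm n (g i) \<le> csqnorm n (f i)" for i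
    by (simp add: g_def)
  with det_eq g_orth show thesis by (rule that)
qed

lemma hadamard_inequality_partial:
  fixes f :: "nat \<Rightarrow> nat \<Rightarrow> complex"
  assumes "k \<le> n" and "\<And>i l. i < k \<Longrightarrow> l < k \<Longrightarrow> i \<noteq> l \<Longrightarrow> cinner n (f i) (f l) = 0"
  shows "cmod (det (mat n n (\<lambda>(i,j). f i j))) \<le> (\<Prod>i<n. sqrt (csqnorm n (f i)))"
  using assms
proof (induction "n - k" arbitrary: k f)
  case 0
  then show ?case by (simp add: hadamard_orthogonal_rows)
next
  case (Suc m)
  then have "k < n" by simp
  then obtain g where det_eq: "det (mat n n (\<lambda>(i,j). g i j)) = det (mat n n (\<lambda>(i,j). f i j))"
    and orth: "\<And>i l. i \<le> k \<Longrightarrow> l \<le> k \<Longrightarrow> i \<noteq> l \<Longrightarrow> cinner n (g i) (g l) = 0"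
    and norms: "\<And>i. csqnorm n (g i) \<le> csqnorm n (f i)"
    using orthogonalize_row[of k n f] Suc.prems(2) by blast
  have "cmod (det (mat n n (\<lambda>(i,j). f i j))) = cmod (det (mat n n (\<lambda>(i,j). g i j)))"
    by (simp add: det_eq)
  also have "\<dots> \<le> (\<Prod>i<n. sqrt (csqnorm n (g i)))"
    by (rule Suc.hyps(1)[of "Suc k"]) (use Suc.hyps(2) \<open>k < n\<close> orth in \<open>auto simp: less_Suc_eq_le\<close>)
  also have "\<dots> \<le> (\<Prod>i<n. sqrt (csqnorm n (f i)))"
    by (intro prod_mono) (simp add: norms csqnorm_nonneg)
  finally show ?case .
qed

theorem hadamard_inequality:
  "cmod (det (mat n n (\<lambda>(i,j). f i j))) \<le> (\<Prod>i<n. sqrt (csqnorm n (f i)))"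
  by (rule hadamard_inequality_partial[of 0]) auto

lemma binomial_le_pow_div_fact: "real (k choose s) \<le> real k ^ s / fact s"
proof -
  have "real ((k choose s) * fact s) \<le> real (k ^ s)"
    using binomial_fact_pow[of k s] by linarith
  then show ?thesis by (simp add: field_simps)
qed

lemma first_binomial_terms_le:
  fixes x :: real
  assumes "0 \<le> x"
  shows "x ^ Suc m + of_nat (Suc m) * x ^ m \<le> (x + 1) ^ Suc m"
proof (induction m)
  case (Suc m)
  have "x ^ Suc (Suc m) + of_nat (Suc (Suc m)) * x ^ Suc m
      \<le> (x + 1) * (x ^ Suc m + of_nat (Suc m) * x ^ m)"
    using assms by (simp add: algebra_simps)
  also have "\<dots> \<le> (x + 1) * (x + 1) ^ Suc m"
    using Suc.IH assms by (intro mult_left_mono) simp_all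
  finally show ?case by simp
qed simp

lemma sum_powers_le: "(\<Sum>k<n. real k ^ m) * real (Suc m) \<le> real n ^ Suc m"
proof (induction n)
  case (Suc n)
  have "(\<Sum>k<Suc n. real k ^ m) * real (Suc m) = (\<Sum>k<n. real k ^ m) * real (Suc m) + real (Suc m) * real n ^ m"
    by (simp add: algebra_simps)
  also have "\<dots> \<le> real n ^ Suc m + real (Suc m) * real n ^ m"
    using Suc.IH by simp
  also have "\<dots> \<le> (real n + 1) ^ Suc m"
    by (rule first_binomial_terms_le) simp
  finally show ?case by (simp add: add.commute)
qed simp

lemma three_pow_le_fact_squared: "(3::real) ^ s \<le> real (2 * s + 1) * (fact s)\<^sup>2"
proof (induction s)
  case (Suc s)
  have "3 * real (2 * s + 1) \<le> real (2 * Suc s + 1) * (real (Suc s))\<^sup>2"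
    by (simp add: power2_eq_square algebra_simps)
  then have "3 * (real (2 * s + 1) * (fact s)\<^sup>2) \<le> real (2 * Suc s + 1) * (real (Suc s))\<^sup>2 * (fact s)\<^sup>2"
    by (metis mult.assoc mult_right_mono zero_le_power2)
  moreover have "(3::real) ^ Suc s \<le> 3 * (real (2 * s + 1) * (fact s)\<^sup>2)"
    using Suc.IH by simp
  moreover have "(fact (Suc s) :: real)\<^sup>2 = (real (Suc s))\<^sup>2 * (fact s)\<^sup>2"
    by (simp add: power_mult_distrib)
  ultimately show ?case
    by (simp only: mult.assoc)
qed simp

lemma sum_binomial_squared_le: "(\<Sum>k<n. (real (k choose s))\<^sup>2) \<le> real n ^ (2 * s + 1) / 3 ^ s"
proof -
  have "(\<Sum>k<n. (real (k choose s))\<^sup>2) \<le> (\<Sum>k<n. (real k ^ s / fact s)\<^sup>2)"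
    by (intro sum_mono power_mono binomial_le_pow_div_fact) simp
  also have "\<dots> = (\<Sum>k<n. real k ^ (2 * s)) / (fact s)\<^sup>2"
    by (simp add: power_divide power_mult[symmetric] sum_divide_distrib mult.commute)
  also have "\<dots> \<le> real n ^ (2 * s + 1) / real (2 * s + 1) / (fact s)\<^sup>2"
  proof (intro divide_right_mono)
    show "(\<Sum>k<n. real k ^ (2 * s)) \<le> real n ^ (2 * s + 1) / real (2 * s + 1)"
      using sum_powers_le[where n = n and m = "2 * s"] by (simp add: pos_le_divide_eq)
  qed simp
  also have "\<dots> = real n ^ (2 * s + 1) / (real (2 * s + 1) * (fact s)\<^sup>2)"
    by simp
  also have "\<dots> \<le> real n ^ (2 * s + 1) / 3 ^ s"
    by (intro divide_left_mono three_pow_le_fact_squared) simp_all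
  finally show ?thesis .
qed

section \<open>Divided differences of the monomials\<close>

definition newton_poly :: "(nat \<Rightarrow> 'a::comm_ring_1) \<Rightarrow> nat \<Rightarrow> 'a poly" where
  "newton_poly w k = (\<Prod>l<k. [:- w l, 1:])"

lemma poly_newton_poly: "poly (newton_poly w k) x = (\<Prod>l<k. x - w l)"
  unfolding newton_poly_def by (simp add: poly_prod)

lemma degree_newton_poly: "degree (newton_poly w k :: 'a::idom poly) = k"
  unfolding newton_poly_def by (subst degree_prod_eq_sum_degree) auto

lemma coeff_newton_poly_degree: "coeff (newton_poly w k :: 'a::idom poly) k = 1"
  using lead_coeff_prod[of "\<lambda>l. [:- w l, 1:]" "{..<k}"]
  by (simp add: newton_poly_def[symmetric] degree_newton_poly)

lemma poly_eq_sum_coeff_less: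
  fixes x :: "'a::{comm_semiring_0,semiring_1}"
  assumes "degree p < n"
  shows "poly p x = (\<Sum>j<n. coeff p j * x ^ j)"
proof -
  have "poly p x = (\<Sum>j\<le>degree p. coeff p j * x ^ j)" by (rule poly_altdef)
  also have "\<dots> = (\<Sum>j<n. coeff p j * x ^ j)"
    by (rule sum.mono_neutral_left) (use assms in \<open>auto simp: coeff_eq_0\<close>)
  finally show ?thesis .
qed

lemma norm_prod_list: "norm (\<Prod>x\<leftarrow>xs. f x) = (\<Prod>x\<leftarrow>xs. norm (f x :: 'a::real_normed_div_algebra))"
  by (induction xs) (simp_all add: norm_mult)

lemma prod_list_pos: "(\<And>x. x \<in> set xs \<Longrightarrow> 0 < f x) \<Longrightarrow> 0 < (\<Prod>x\<leftarrow>xs. f x :: 'a::linordered_semidom)"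
  by (induction xs) auto

lemma distinct_nodes:
  fixes w :: "nat \<Rightarrow> 'a"
  assumes "inj_on w {..<n}" "i < n" "distinct js" "set js \<subseteq> {..<i}"
  shows "distinct (w i # map w js)"
proof -
  have "insert i (set js) \<subseteq> {..<n}"
    using assms(2,4) by auto
  then have "inj_on w (insert i (set js))"
    using assms(1) inj_on_subset by blast
  then show ?thesis
    using assms(3,4) by (auto simp: distinct_map inj_on_def)
qed

lemma poly_newton_poly_eq_0: "l < k \<Longrightarrow> poly (newton_poly w k) (w l) = 0"
  unfolding poly_newton_poly by (intro prod_zero bexI[of _ l]) auto

lemma det_newton_coeff_matrix: "det (mat n n (\<lambda>(j,k). coeff (newton_poly w k :: 'a::idom poly) j)) = 1"
proof -
  define C where "C = mat n n (\<lambda>(j,k). coeff (newton_poly w k :: 'a poly) j)"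
  have C: "C \<in> carrier_mat n n"
    unfolding C_def by simp
  have "upper_triangular C"
    by (rule upper_triangularI) (use C in \<open>auto simp: C_def coeff_eq_0 degree_newton_poly\<close>)
  then have "det C = prod_list (diag_mat C)"
    using C by (rule det_upper_triangular)
  also have "\<dots> = 1"
    using C by (simp add: prod_list_diag_prod C_def coeff_newton_poly_degree)
  finally show ?thesis
    unfolding C_def .
qed

lemma divided_diff_newton_poly:
  assumes "k < n"
  shows "(\<Sum>j<n. divided_diff xs (\<lambda>z. z ^ j) * coeff (newton_poly w k) j) = divided_diff xs (poly (newton_poly w k))"
proof -
  have "(\<Sum>j<n. divided_diff xs (\<lambda>z. z ^ j) * coeff (newton_poly w k) j)
      = divided_diff xs (\<lambda>z. \<Sum>j<n. coeff (newton_poly w k) j * z ^ j)"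
    unfolding divided_diff_sum divided_diff_cmult by (simp add: mult.commute)
  also have "\<dots> = divided_diff xs (poly (newton_poly w k))"
    using assms by (intro divided_diff_cong) (simp add: poly_eq_sum_coeff_less degree_newton_poly)
  finally show ?thesis .
qed

text \<open>Multiplying the matrix of divided differences of the monomials by the unitriangular
  coefficient matrix of the Newton basis yields a lower triangular matrix: row \<open>i\<close> holds the
  divided differences of the Newton polynomials, which vanish at all nodes \<open>w\<^sub>l\<close>, \<open>l \<le> i\<close>.\<close>

lemma det_divided_differences_of_powers:
  fixes w :: "nat \<Rightarrow> 'a::field" and T :: "nat \<Rightarrow> nat list"
  assumes inj: "inj_on w {..<n}"
    and T: "\<And>i. i < n \<Longrightarrow> distinct (T i) \<and> set (T i) \<subseteq> {..<i}"
  shows "det (mat n n (\<lambda>(i,k). divided_diff (w i # map w (T i)) (\<lambda>z. z ^ k)))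
      = (\<Prod>i<n. (\<Prod>l<i. w i - w l) / (\<Prod>j\<leftarrow>T i. w i - w j))"
proof -
  define N where "N = mat n n (\<lambda>(i,k). divided_diff (w i # map w (T i)) (\<lambda>z. z ^ k))"
  define C where "C = mat n n (\<lambda>(j,k). coeff (newton_poly w k) j)"
  have N: "N \<in> carrier_mat n n" and C: "C \<in> carrier_mat n n"
    unfolding N_def C_def by simp_all
  have NC: "(N * C) $$ (i,k) = divided_diff (w i # map w (T i)) (poly (newton_poly w k))"
    if "i < n" "k < n" for i k
    using that divided_diff_newton_poly[of k n]
    by (simp add: N_def C_def scalar_prod_def row_def col_def atLeast0LessThan)
  have "(N * C) $$ (i,k) = 0" if ik: "i < k" "k < n" for i k
  proof -
    have "l < k" if "l \<in> insert i (set (T i))" for l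
      using that T[of i] ik by auto
    then have "divided_diff (w i # map w (T i)) (poly (newton_poly w k)) = 0"
      by (intro divided_diff_eq_0) (auto intro: poly_newton_poly_eq_0)
    then show ?thesis
      using ik by (simp add: NC)
  qed
  then have "det (N * C) = prod_list (diag_mat (N * C))"
    using N C by (intro det_lower_triangular[of n]) auto
  also have "\<dots> = (\<Prod>i = 0..<n. (N * C) $$ (i,i))"
    using N C by (simp add: prod_list_diag_prod)
  also have "\<dots> = (\<Prod>i<n. (\<Prod>l<i. w i - w l) / (\<Prod>j\<leftarrow>T i. w i - w j))"
  proof (rule prod.cong)
    fix i assume "i \<in> {..<n}"
    then have i: "i < n" by simp
    have "divided_diff (w i # map w (T i)) (poly (newton_poly w i))
        = poly (newton_poly w i) (w i) / (\<Prod>y\<leftarrow>map w (T i). w i - y)"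
      using distinct_nodes[OF inj i] T[OF i]
      by (intro divided_diff_vanishing_on_tail) (auto intro!: poly_newton_poly_eq_0)
    then show "(N * C) $$ (i,i) = (\<Prod>l<i. w i - w l) / (\<Prod>j\<leftarrow>T i. w i - w j)"
      by (simp add: NC i poly_newton_poly comp_def)
  qed (simp add: atLeast0LessThan)
  also have "det (N * C) = det N"
    using det_mult[OF N C] det_newton_coeff_matrix[of n w] by (simp add: C_def)
  finally show ?thesis
    unfolding N_def .
qed

lemma row_norm_divided_differences_of_powers_le:
  assumes "distinct (x # ys)" "\<And>z. z \<in> set (x # ys) \<Longrightarrow> cmod z \<le> R" "1 \<le> R"
  shows "sqrt (csqnorm n (\<lambda>k. divided_diff (x # ys) (\<lambda>z. z ^ k)))
      \<le> R ^ (n - 1) * sqrt (real n) * (real n / sqrt 3) ^ length ys"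
proof -
  let ?s = "length ys"
  have entry: "cmod (divided_diff (x # ys) (\<lambda>z. z ^ k)) \<le> real (k choose ?s) * R ^ (n - 1)"
    if "k < n" for k
  proof -
    have "cmod (divided_diff (x # ys) (\<lambda>z. z ^ k)) \<le> real (k choose ?s) * R ^ (k - ?s)"
      by (rule norm_divided_diff_power_le) (use assms in auto)
    also have "\<dots> \<le> real (k choose ?s) * R ^ (n - 1)"
      using assms(3) that by (intro mult_left_mono power_increasing) auto
    finally show ?thesis .
  qed
  have "csqnorm n (\<lambda>k. divided_diff (x # ys) (\<lambda>z. z ^ k)) \<le> (\<Sum>k<n. (real (k choose ?s) * R ^ (n - 1))\<^sup>2)"
    unfolding csqnorm_def by (intro sum_mono power_mono entry) auto
  also have "\<dots> = (R ^ (n - 1))\<^sup>2 * (\<Sum>k<n. (real (k choose ?s))\<^sup>2)"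
    by (simp add: power_mult_distrib sum_distrib_left mult.commute)
  also have "\<dots> \<le> (R ^ (n - 1))\<^sup>2 * (real n ^ (2 * ?s + 1) / 3 ^ ?s)"
    by (intro mult_left_mono sum_binomial_squared_le) simp
  also have "\<dots> = (R ^ (n - 1) * sqrt (real n) * (real n / sqrt 3) ^ ?s)\<^sup>2"
  proof -
    have "((real n / sqrt 3) ^ ?s)\<^sup>2 = ((real n / sqrt 3)\<^sup>2) ^ ?s"
      by (simp add: power_mult[symmetric] mult.commute)
    also have "\<dots> = real n ^ (2 * ?s) / 3 ^ ?s"
      by (simp add: power_divide power_mult)
    finally show ?thesis
      by (simp add: power_mult_distrib)
  qed
  finally show ?thesis
    using assms(3) by (simp add: real_le_lsqrt)
qed

text \<open>Hadamard's inequality for the matrix of divided differences of the monomials; the lists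
  \<open>T i\<close> will be the earlier neighbours of vertex \<open>i\<close>.\<close>

theorem prod_differences_le:
  fixes w :: "nat \<Rightarrow> complex" and T :: "nat \<Rightarrow> nat list"
  assumes inj: "inj_on w {..<n}"
    and T: "\<And>i. i < n \<Longrightarrow> distinct (T i) \<and> set (T i) \<subseteq> {..<i}"
    and mono: "\<And>i j. i < n \<Longrightarrow> j \<in> set (T i) \<Longrightarrow> cmod (w j) \<le> cmod (w i)"
  shows "(\<Prod>i<n. \<Prod>l<i. cmod (w i - w l))
      \<le> (\<Prod>i<n. \<Prod>j\<leftarrow>T i. cmod (w i - w j)) * (\<Prod>i<n. max 1 (cmod (w i))) ^ (n - 1)
         * sqrt (real n) ^ n * (real n / sqrt 3) ^ (\<Sum>i<n. length (T i))"
proof -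
  define D where "D i = (\<Prod>j\<leftarrow>T i. cmod (w i - w j))" for i
  define B where "B = (\<Prod>i<n. max 1 (cmod (w i))) ^ (n - 1) * sqrt (real n) ^ n
    * (real n / sqrt 3) ^ (\<Sum>i<n. length (T i))"
  have D_pos: "0 < D i" if "i < n" for i
    using distinct_nodes[OF inj that] T[OF that]
    unfolding D_def by (intro prod_list_pos) auto
  have row: "sqrt (csqnorm n (\<lambda>k. divided_diff (w i # map w (T i)) (\<lambda>z. z ^ k)))
      \<le> max 1 (cmod (w i)) ^ (n - 1) * sqrt (real n) * (real n / sqrt 3) ^ length (T i)"
    if i: "i < n" for i
    using row_norm_divided_differences_of_powers_le[OF distinct_nodes[OF inj i], where R = "max 1 (cmod (w i))" and n = n]
      T[OF i] mono[OF i] by force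
  have "(\<Prod>i<n. (\<Prod>l<i. cmod (w i - w l)) / D i)
      = cmod (det (mat n n (\<lambda>(i,k). divided_diff (w i # map w (T i)) (\<lambda>z. z ^ k))))"
    using det_divided_differences_of_powers[OF inj T]
    by (simp add: D_def prod_norm[symmetric] norm_divide norm_prod_list)
  also have "\<dots> \<le> (\<Prod>i<n. sqrt (csqnorm n (\<lambda>k. divided_diff (w i # map w (T i)) (\<lambda>z. z ^ k))))"
    by (rule hadamard_inequality)
  also have "\<dots> \<le> (\<Prod>i<n. max 1 (cmod (w i)) ^ (n - 1) * sqrt (real n) * (real n / sqrt 3) ^ length (T i))"
    by (rule prod_mono, rule conjI[OF real_sqrt_ge_zero[OF csqnorm_nonneg] row]) simp
  also have "\<dots> = B"
    by (simp add: B_def prod.distrib prod_power_distrib power_sum)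
  finally have ratio: "(\<Prod>i<n. (\<Prod>l<i. cmod (w i - w l)) / D i) \<le> B" .
  have "(\<Prod>i<n. \<Prod>l<i. cmod (w i - w l)) = (\<Prod>i<n. (\<Prod>l<i. cmod (w i - w l)) / D i * D i)"
    using D_pos by (intro prod.cong) (simp_all add: less_imp_neq[symmetric])
  also have "\<dots> = (\<Prod>i<n. (\<Prod>l<i. cmod (w i - w l)) / D i) * (\<Prod>i<n. D i)"
    by (rule prod.distrib)
  also have "\<dots> \<le> B * (\<Prod>i<n. D i)"
    using ratio D_pos by (intro mult_right_mono prod_nonneg) (auto intro: less_imp_le)
  finally show ?thesis
    by (simp add: B_def D_def mult_ac)
qed

lemma prod_pairs_less_swap:
  fixes h :: "'a::linorder \<Rightarrow> 'a \<Rightarrow> 'b::comm_monoid_mult"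
  assumes "\<And>i j. h i j = h j i"
  shows "(\<Prod>(i,j)\<in>{(i,j). i\<in>A \<and> j\<in>A \<and> i<j}. h i j) = (\<Prod>(i,j)\<in>{(i,j). i\<in>A \<and> j\<in>A \<and> j<i}. h i j)"
  by (rule prod.reindex_bij_witness[of _ prod.swap prod.swap]) (auto simp: assms)

lemma prod_distinct_pairs_eq_square:
  fixes h :: "'a::linorder \<Rightarrow> 'a \<Rightarrow> 'b::comm_monoid_mult"
  assumes A: "finite A" and sym: "\<And>i j. h i j = h j i"
  shows "(\<Prod>(i,j)\<in>{(i,j). i\<in>A \<and> j\<in>A \<and> i\<noteq>j}. h i j) = (\<Prod>(i,j)\<in>{(i,j). i\<in>A \<and> j\<in>A \<and> i<j}. h i j)\<^sup>2"
proof -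
  let ?lt = "{(i,j). i\<in>A \<and> j\<in>A \<and> i<j}" and ?gt = "{(i,j). i\<in>A \<and> j\<in>A \<and> j<i}"
  have fin: "finite ?lt" "finite ?gt"
    by (rule finite_subset[of _ "A \<times> A"], auto simp: A)+
  have "{(i,j). i\<in>A \<and> j\<in>A \<and> i\<noteq>j} = ?lt \<union> ?gt" by auto
  then have "(\<Prod>(i,j)\<in>{(i,j). i\<in>A \<and> j\<in>A \<and> i\<noteq>j}. h i j) = (\<Prod>(i,j)\<in>?lt \<union> ?gt. h i j)"
    by simp
  also have "\<dots> = (\<Prod>(i,j)\<in>?lt. h i j) * (\<Prod>(i,j)\<in>?gt. h i j)"
    by (rule prod.union_disjoint) (use fin in auto)
  also have "(\<Prod>(i,j)\<in>?gt. h i j) = (\<Prod>(i,j)\<in>?lt. h i j)"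
    using prod_pairs_less_swap[of h A] sym by simp
  finally show ?thesis by (simp add: power2_eq_square)
qed

lemma prod_distinct_pairs_reindex:
  fixes h :: "'b \<Rightarrow> 'b \<Rightarrow> 'c::comm_monoid_mult"
  assumes "inj_on f A" "f ` A = B"
  shows "(\<Prod>(i,j)\<in>{(i,j). i\<in>A \<and> j\<in>A \<and> i\<noteq>j}. h (f i) (f j)) = (\<Prod>(u,v)\<in>{(u,v). u\<in>B \<and> v\<in>B \<and> u\<noteq>v}. h u v)"
proof -
  have "bij_betw (\<lambda>(i, j). (f i, f j)) {(i,j). i\<in>A \<and> j\<in>A \<and> i\<noteq>j} {(u,v). u\<in>B \<and> v\<in>B \<and> u\<noteq>v}"
  proof (rule bij_betw_imageI)
    show "inj_on (\<lambda>(i, j). (f i, f j)) {(i,j). i\<in>A \<and> j\<in>A \<and> i\<noteq>j}"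
      using assms(1) by (auto simp: inj_on_def)
    show "(\<lambda>(i, j). (f i, f j)) ` {(i,j). i\<in>A \<and> j\<in>A \<and> i\<noteq>j} = {(u,v). u\<in>B \<and> v\<in>B \<and> u\<noteq>v}"
      using assms by (auto simp: inj_on_def image_iff)
  qed
  from prod.reindex_bij_betw[OF this, of "\<lambda>(u,v). h u v"] show ?thesis
    by (simp add: case_prod_unfold)
qed

lemma prod_distinct_pairs_enumeration:
  fixes w :: "nat \<Rightarrow> 'a" and h :: "'a \<Rightarrow> 'a \<Rightarrow> 'b::comm_monoid_mult"
  assumes inj: "inj_on w {..<r}" and sym: "\<And>u v. h u v = h v u"
  shows "(\<Prod>(u,v)\<in>{(u,v). u \<in> w ` {..<r} \<and> v \<in> w ` {..<r} \<and> u \<noteq> v}. h u v)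
      = (\<Prod>i<r. \<Prod>l<i. h (w i) (w l))\<^sup>2"
proof -
  have "(\<Prod>i<r. \<Prod>l<i. h (w i) (w l)) = (\<Prod>(i,l)\<in>{(i,l). i\<in>{..<r} \<and> l\<in>{..<r} \<and> l<i}. h (w i) (w l))"
    by (subst prod.Sigma) (auto intro: prod.cong)
  also have "\<dots> = (\<Prod>(i,l)\<in>{(i,l). i\<in>{..<r} \<and> l\<in>{..<r} \<and> i<l}. h (w i) (w l))"
    using sym by (intro prod_pairs_less_swap[symmetric]) simp
  finally show ?thesis
    using prod_distinct_pairs_eq_square[of "{..<r}" "\<lambda>i l. h (w i) (w l)"]
      prod_distinct_pairs_reindex[OF inj refl, of h] sym
    by simp
qed

section \<open>Edges of a graph on an ordered vertex set\<close>

text \<open>With the vertices enumerated as \<open>w 0, w 1, \<dots>\<close>, every edge is counted exactly once as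
  \<open>{w i, w j}\<close> with \<open>j\<close> an earlier neighbour of \<open>i\<close>.\<close>

definition earlier_neighbours :: "(nat \<Rightarrow> 'a) \<Rightarrow> 'a set set \<Rightarrow> nat \<Rightarrow> nat list" where
  "earlier_neighbours w E i = filter (\<lambda>j. {w i, w j} \<in> E) [0..<i]"

lemma edge_length_doubleton: "edge_length {u, v} = cmod (u - v)"
  unfolding edge_length_def
  by (rule the_equality) (auto simp: doubleton_eq_iff norm_minus_commute)

lemma bij_betw_earlier_neighbours:
  assumes inj: "inj_on w {..<r}"
    and E: "E \<subseteq> {{u, v} | u v. u \<in> w ` {..<r} \<and> v \<in> w ` {..<r} \<and> u \<noteq> v}"
  shows "bij_betw (\<lambda>(i,j). {w i, w j}) (SIGMA i:{..<r}. set (earlier_neighbours w E i)) E"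
proof (rule bij_betw_imageI)
  show "inj_on (\<lambda>(i,j). {w i, w j}) (SIGMA i:{..<r}. set (earlier_neighbours w E i))"
  proof (rule inj_onI)
    fix p q
    assume "p \<in> (SIGMA i:{..<r}. set (earlier_neighbours w E i))"
      and "q \<in> (SIGMA i:{..<r}. set (earlier_neighbours w E i))"
      and pq: "(\<lambda>(i,j). {w i, w j}) p = (\<lambda>(i,j). {w i, w j}) q"
    moreover obtain i j i' j' where ij: "p = (i, j)" "q = (i', j')"
      by fastforce
    ultimately have b: "i < r" "j < i" "i' < r" "j' < i'" and eq: "{w i, w j} = {w i', w j'}"
      by (auto simp: earlier_neighbours_def)
    from eq consider "w i = w i'" "w j = w j'" | "w i = w j'" "w j = w i'"
      by (auto simp: doubleton_eq_iff)
    then show "p = q"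
    proof cases
      case 1
      then show ?thesis using inj_onD[OF inj, of i i'] inj_onD[OF inj, of j j'] b ij by auto
    next
      case 2
      then show ?thesis using inj_onD[OF inj, of i j'] inj_onD[OF inj, of j i'] b ij by auto
    qed
  qed
  show "(\<lambda>(i,j). {w i, w j}) ` (SIGMA i:{..<r}. set (earlier_neighbours w E i)) = E"
  proof (intro equalityI subsetI)
    fix e assume "e \<in> E"
    then obtain a b where ab: "e = {w a, w b}" "a < r" "b < r" "w a \<noteq> w b"
      using E by blast
    then have "a \<noteq> b" by auto
    then consider "b < a" | "a < b" by linarith
    then show "e \<in> (\<lambda>(i,j). {w i, w j}) ` (SIGMA i:{..<r}. set (earlier_neighbours w E i))"
    proof cases
      case 1
      then show ?thesis
        using ab \<open>e \<in> E\<close> by (intro image_eqI[of _ _ "(a,b)"]) (auto simp: earlier_neighbours_def)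
    next
      case 2
      then show ?thesis
        using ab \<open>e \<in> E\<close>
        by (intro image_eqI[of _ _ "(b,a)"]) (auto simp: earlier_neighbours_def insert_commute)
    qed
  qed (auto simp: earlier_neighbours_def)
qed

lemma card_edges_eq_sum_earlier_neighbours:
  assumes "inj_on w {..<r}"
    and "E \<subseteq> {{u, v} | u v. u \<in> w ` {..<r} \<and> v \<in> w ` {..<r} \<and> u \<noteq> v}"
  shows "card E = (\<Sum>i<r. length (earlier_neighbours w E i))"
proof -
  have "card E = card (SIGMA i:{..<r}. set (earlier_neighbours w E i))"
    using bij_betw_same_card[OF bij_betw_earlier_neighbours[OF assms]] by simp
  also have "\<dots> = (\<Sum>i<r. card (set (earlier_neighbours w E i)))"
    by (simp add: card_SigmaI)
  also have "\<dots> = (\<Sum>i<r. length (earlier_neighbours w E i))"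
    by (intro sum.cong refl distinct_card) (simp add: earlier_neighbours_def)
  finally show ?thesis .
qed

lemma prod_edge_length_eq:
  assumes "inj_on w {..<r}"
    and "E \<subseteq> {{u, v} | u v. u \<in> w ` {..<r} \<and> v \<in> w ` {..<r} \<and> u \<noteq> v}"
  shows "(\<Prod>e\<in>E. edge_length e) = (\<Prod>i<r. \<Prod>j\<leftarrow>earlier_neighbours w E i. cmod (w i - w j))"
proof -
  have "(\<Prod>e\<in>E. edge_length e) = (\<Prod>(i,j)\<in>(SIGMA i:{..<r}. set (earlier_neighbours w E i)). cmod (w i - w j))"
    by (subst prod.reindex_bij_betw[OF bij_betw_earlier_neighbours[OF assms], symmetric])
      (simp add: case_prod_unfold edge_length_doubleton)
  also have "\<dots> = (\<Prod>i<r. \<Prod>j\<in>set (earlier_neighbours w E i). cmod (w i - w j))"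
    by (rule prod.Sigma[symmetric]) auto
  also have "\<dots> = (\<Prod>i<r. \<Prod>j\<leftarrow>earlier_neighbours w E i. cmod (w i - w j))"
    by (intro prod.cong refl prod.distinct_set_conv_list) (simp add: earlier_neighbours_def)
  finally show ?thesis .
qed

section \<open>Roots, multiplicities and the subdiscriminant\<close>

lemma proots_prod_linear_factors: "proots (\<Prod>x\<leftarrow>xs. [:- x, 1:]) = mset (xs :: 'a::idom list)"
proof (induction xs)
  case (Cons x xs)
  have "(\<Prod>y\<leftarrow>xs. [:- y, 1:]) \<noteq> 0"
    by (auto simp: prod_list_zero_iff)
  then have "proots (\<Prod>y\<leftarrow>x # xs. [:- y, 1:]) = proots [:- x, 1:] + proots (\<Prod>y\<leftarrow>xs. [:- y, 1:])"
    unfolding list.map prod_list.Cons by (intro proots_mult) auto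
  then show ?case
    using Cons.IH by simp
qed simp

lemma proots_eq_mset_root_list:
  assumes "P \<noteq> 0"
  shows "proots P = mset (root_list P)"
proof -
  have "\<exists>xs. P = Polynomial.smult (lead_coeff P) (\<Prod>x\<leftarrow>xs. [:- x, 1:])"
  proof -
    obtain xs where xs: "mset xs = proots P"
      using ex_mset by blast
    have "P = Polynomial.smult (lead_coeff P) (\<Prod>x\<in>#proots P. [:- x, 1:])"
      by (rule complex_poly_decompose_multiset[symmetric])
    also have "(\<Prod>x\<in>#proots P. [:- x, 1:]) = (\<Prod>x\<leftarrow>xs. [:- x, 1:])"
      by (subst prod_mset_prod_list[symmetric]) (simp add: xs[symmetric])
    finally show ?thesis by blast
  qed
  then have "P = Polynomial.smult (lead_coeff P) (\<Prod>x\<leftarrow>root_list P. [:- x, 1:])"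
    unfolding root_list_def by (rule someI_ex)
  then show ?thesis
    using assms proots_prod_linear_factors[of "root_list P"] by (metis leading_coeff_0_iff proots_smult)
qed

lemma length_root_list: "P \<noteq> 0 \<Longrightarrow> length (root_list P) = degree P"
  using size_proots_complex[of P] by (simp add: proots_eq_mset_root_list)

lemma set_root_list: "P \<noteq> 0 \<Longrightarrow> set (root_list P) = {x. poly P x = 0}"
  using set_count_proots[of P] by (simp add: proots_eq_mset_root_list)

lemma prod_set_le_prod_list:
  fixes f :: "'a \<Rightarrow> real"
  assumes "\<And>x. 1 \<le> f x"
  shows "(\<Prod>u\<in>set xs. f u) \<le> (\<Prod>x\<leftarrow>xs. f x)"
proof (induction xs)
  case (Cons x xs)
  have "0 \<le> (\<Prod>u\<in>set xs. f u)"
    using assms by (intro prod_nonneg) (meson order_trans zero_le_one)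
  show ?case
  proof (cases "x \<in> set xs")
    case True
    then have "(\<Prod>u\<in>set (x # xs). f u) = (\<Prod>u\<in>set xs. f u)"
      by (simp add: insert_absorb)
    also have "\<dots> \<le> (\<Prod>x\<leftarrow>xs. f x)"
      by (rule Cons.IH)
    also have "\<dots> \<le> f x * (\<Prod>x\<leftarrow>xs. f x)"
      using Cons.IH assms[of x] \<open>0 \<le> (\<Prod>u\<in>set xs. f u)\<close> by (simp add: mult_le_cancel_right1)
    finally show ?thesis by simp
  next
    case False
    then show ?thesis
      using Cons.IH assms[of x] by (simp add: mult_left_mono)
  qed
qed simp

lemma mahler_measure_ge:
  assumes "P \<noteq> 0"
  shows "cmod (lead_coeff P) * (\<Prod>u\<in>{x. poly P x = 0}. max 1 (cmod u)) \<le> mahler_measure P"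
  unfolding mahler_measure_def set_root_list[OF assms, symmetric]
  by (intro mult_left_mono prod_set_le_prod_list) auto

text \<open>Only these index sets give a nonzero term in \<open>sDisc\<^sub>d\<^sub>-\<^sub>r\<close>.\<close>

definition transversals :: "'a list \<Rightarrow> nat set set" where
  "transversals xs = {I. I \<subseteq> {0..<length xs} \<and> card I = card (set xs) \<and> inj_on (nth xs) I}"

lemma image_nth_transversal:
  assumes "I \<in> transversals xs"
  shows "nth xs ` I = set xs"
proof (rule card_subset_eq)
  show "nth xs ` I \<subseteq> set xs" and "card (nth xs ` I) = card (set xs)"
    using assms by (auto simp: transversals_def card_image)
qed simp

lemma norm_subset_discriminant_transversal:
  fixes xs :: "complex list"
  assumes tr: "I \<in> transversals xs"
  shows "cmod (\<Prod>(i,j)\<in>{(i,j). i\<in>I \<and> j\<in>I \<and> i<j}. (xs!i - xs!j)\<^sup>2)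
    = (\<Prod>(u,v)\<in>{(u,v). u\<in>set xs \<and> v\<in>set xs \<and> u\<noteq>v}. cmod (u - v))"
proof -
  have I: "finite I" "inj_on (nth xs) I"
    using tr finite_subset[OF _ finite_atLeastLessThan] by (auto simp: transversals_def)
  have "cmod (\<Prod>(i,j)\<in>{(i,j). i\<in>I \<and> j\<in>I \<and> i<j}. (xs!i - xs!j)\<^sup>2)
      = (\<Prod>(i,j)\<in>{(i,j). i\<in>I \<and> j\<in>I \<and> i<j}. (cmod (xs!i - xs!j))\<^sup>2)"
    by (simp add: prod_norm[symmetric] norm_power case_prod_unfold)
  also have "\<dots> = (\<Prod>(i,j)\<in>{(i,j). i\<in>I \<and> j\<in>I \<and> i<j}. cmod (xs!i - xs!j))\<^sup>2"
    by (simp add: prod_power_distrib case_prod_unfold)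
  also have "\<dots> = (\<Prod>(i,j)\<in>{(i,j). i\<in>I \<and> j\<in>I \<and> i\<noteq>j}. cmod (xs!i - xs!j))"
    by (rule prod_distinct_pairs_eq_square[symmetric]) (use I in \<open>auto simp: norm_minus_commute\<close>)
  also have "\<dots> = (\<Prod>(u,v)\<in>{(u,v). u\<in>set xs \<and> v\<in>set xs \<and> u\<noteq>v}. cmod (u - v))"
    by (rule prod_distinct_pairs_reindex[OF I(2) image_nth_transversal[OF tr]])
  finally show ?thesis .
qed

lemma subset_discriminant_eq_0:
  fixes xs :: "'a::comm_ring_1 list"
  assumes "finite I" "\<not> inj_on (nth xs) I"
  shows "(\<Prod>(i,j)\<in>{(i,j). i\<in>I \<and> j\<in>I \<and> i<j}. (xs!i - xs!j)\<^sup>2) = 0"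
proof -
  obtain i j where ij: "i \<in> I" "j \<in> I" "i \<noteq> j" "xs!i = xs!j"
    using assms(2) unfolding inj_on_def by blast
  have "finite {(i,j). i\<in>I \<and> j\<in>I \<and> i<j}"
    by (rule finite_subset[of _ "I \<times> I"]) (use assms(1) in auto)
  then show ?thesis
    using ij by (intro prod_zero bexI[of _ "(min i j, max i j)"]) (auto simp: min_def max_def)
qed

lemma norm_sum_subset_discriminants_le:
  fixes xs :: "complex list"
  shows "cmod (\<Sum>I\<in>{I. I \<subseteq> {0..<length xs} \<and> card I = card (set xs)}.
            \<Prod>(i,j)\<in>{(i,j). i\<in>I \<and> j\<in>I \<and> i<j}. (xs!i - xs!j)\<^sup>2)
    \<le> real (card (transversals xs)) * (\<Prod>(u,v)\<in>{(u,v). u\<in>set xs \<and> v\<in>set xs \<and> u\<noteq>v}. cmod (u - v))"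
proof -
  define D where "D = (\<Prod>(u,v)\<in>{(u,v). u\<in>set xs \<and> v\<in>set xs \<and> u\<noteq>v}. cmod (u - v))"
  define II where "II = {I. I \<subseteq> {0..<length xs} \<and> card I = card (set xs)}"
  have fin: "finite II"
    unfolding II_def by (rule finite_subset[of _ "Pow {0..<length xs}"]) auto
  have summand: "cmod (\<Prod>(i,j)\<in>{(i,j). i\<in>I \<and> j\<in>I \<and> i<j}. (xs!i - xs!j)\<^sup>2)
      = (if I \<in> transversals xs then D else 0)" if I: "I \<in> II" for I
  proof -
    have "finite I"
      using I finite_subset[OF _ finite_atLeastLessThan] by (auto simp: II_def)
    then show ?thesis
      using I subset_discriminant_eq_0[of I xs] norm_subset_discriminant_transversal[of I xs]
      by (auto simp: II_def transversals_def D_def)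
  qed
  have "cmod (\<Sum>I\<in>II. \<Prod>(i,j)\<in>{(i,j). i\<in>I \<and> j\<in>I \<and> i<j}. (xs!i - xs!j)\<^sup>2)
      \<le> (\<Sum>I\<in>II. cmod (\<Prod>(i,j)\<in>{(i,j). i\<in>I \<and> j\<in>I \<and> i<j}. (xs!i - xs!j)\<^sup>2))"
    by (rule norm_sum)
  also have "\<dots> = (\<Sum>I\<in>II. if I \<in> transversals xs then D else 0)"
    by (rule sum.cong) (simp_all add: summand)
  also have "\<dots> = (\<Sum>I\<in>{I\<in>II. I \<in> transversals xs}. D)"
    by (rule sum.inter_filter[OF fin, symmetric])
  also have "{I\<in>II. I \<in> transversals xs} = transversals xs"
    by (auto simp: II_def transversals_def)
  also have "(\<Sum>I\<in>transversals xs. D) = real (card (transversals xs)) * D"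
    by simp
  finally show ?thesis
    unfolding II_def D_def .
qed

lemma card_transversals_le: "card (transversals xs) \<le> (\<Prod>u\<in>set xs. count_list xs u)"
proof -
  define F where "F u = {i. i < length xs \<and> xs!i = u}" for u
  have count: "count_list xs u = card (F u)" for u
    by (simp add: F_def count_list_eq_length_filter length_filter_conv_card eq_commute)
  have "transversals xs \<subseteq> (\<lambda>g. g ` set xs) ` (PiE (set xs) F)"
  proof
    fix I assume I: "I \<in> transversals xs"
    then have IS: "I \<subseteq> {0..<length xs}" "inj_on (nth xs) I" and img: "nth xs ` I = set xs"
      by (auto simp: transversals_def image_nth_transversal)
    define g where "g = restrict (inv_into I (nth xs)) (set xs)"
    have "g \<in> PiE (set xs) F"
    proof
      fix u assume u: "u \<in> set xs"
      then have "inv_into I (nth xs) u \<in> I" "xs ! (inv_into I (nth xs) u) = u"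
        using img by (auto intro: inv_into_into f_inv_into_f)
      then show "g u \<in> F u"
        using u IS(1) by (auto simp: g_def F_def)
    qed (simp add: g_def)
    moreover have "g ` set xs = I"
      using img inv_into_image_cancel[OF IS(2) order_refl] by (simp add: g_def)
    ultimately show "I \<in> (\<lambda>g. g ` set xs) ` (PiE (set xs) F)" by blast
  qed
  then have "card (transversals xs) \<le> card ((\<lambda>g. g ` set xs) ` (PiE (set xs) F))"
    by (rule card_mono[rotated]) (simp add: finite_PiE F_def)
  also have "\<dots> \<le> card (PiE (set xs) F)"
    by (rule card_image_le) (simp add: finite_PiE F_def)
  also have "\<dots> = (\<Prod>u\<in>set xs. count_list xs u)"
    by (simp add: card_PiE count)
  finally show ?thesis .
qed

lemma cube_le_three_pow: "(m::nat) ^ 3 \<le> 3 ^ m"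
proof (induction m rule: less_induct)
  case (less m)
  show ?case
  proof (cases "m \<le> 3")
    case True
    then have "m = 0 \<or> m = 1 \<or> m = 2 \<or> m = 3" by auto
    then show ?thesis by auto
  next
    case False
    then obtain k where k: "m = Suc k" "3 \<le> k" by (cases m) auto
    have "3 * k\<^sup>2 \<le> k ^ 3"
      using k by (simp add: power2_eq_square power3_eq_cube)
    moreover have "3 * k + 1 \<le> k ^ 3"
    proof -
      have "4 \<le> k * k" using k mult_le_mono[of 3 k 3 k] by simp
      then have "4 * k \<le> k * k * k" by simp
      then show ?thesis using k unfolding power3_eq_cube by linarith
    qed
    moreover have "(Suc k) ^ 3 = k ^ 3 + 3 * k\<^sup>2 + 3 * k + 1"
      by (simp add: power3_eq_cube power2_eq_square algebra_simps)
    ultimately have "(Suc k) ^ 3 \<le> 3 * k ^ 3"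
      by linarith
    also have "\<dots> \<le> 3 * 3 ^ k"
      using less k by simp
    finally show ?thesis using k by simp
  qed
qed

lemma cube_le_nine_pow: "1 \<le> (m::nat) \<Longrightarrow> m ^ 3 \<le> 9 ^ (m - 1)"
proof (induction m rule: dec_induct)
  case (step k)
  have "(Suc k) ^ 3 \<le> (2 * k) ^ 3"
    using step by (intro power_mono) simp_all
  also have "\<dots> \<le> 9 * 9 ^ (k - 1)"
    using step.IH by (simp add: power_mult_distrib)
  also have "\<dots> = 9 ^ (Suc k - 1)"
    using step by (cases k) auto
  finally show ?case .
qed simp

lemma prod_count_list_cube_le:
  "(\<Prod>u\<in>set xs. count_list xs u) ^ 3 \<le> 3 ^ length xs"
  "(\<Prod>u\<in>set xs. count_list xs u) ^ 3 \<le> 9 ^ (length xs - card (set xs))"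
proof -
  have total: "(\<Sum>u\<in>set xs. count_list xs u) = length xs"
    by (rule sum_count_set) simp_all
  have pos: "1 \<le> count_list xs u" if "u \<in> set xs" for u
    using that count_list_0_iff[of xs u] by linarith
  have cube: "(\<Prod>u\<in>set xs. count_list xs u) ^ 3 = (\<Prod>u\<in>set xs. count_list xs u ^ 3)"
    by (simp add: prod_power_distrib)
  also have "\<dots> \<le> (\<Prod>u\<in>set xs. 3 ^ count_list xs u)"
    by (rule prod_mono) (simp add: cube_le_three_pow)
  also have "\<dots> = 3 ^ length xs"
    by (simp add: power_sum[symmetric] total)
  finally show "(\<Prod>u\<in>set xs. count_list xs u) ^ 3 \<le> 3 ^ length xs" .
  have "(\<Prod>u\<in>set xs. count_list xs u) ^ 3 \<le> (\<Prod>u\<in>set xs. 9 ^ (count_list xs u - 1))"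
    unfolding cube by (rule prod_mono) (use cube_le_nine_pow pos in auto)
  also have "\<dots> = 9 ^ (\<Sum>u\<in>set xs. count_list xs u - 1)"
    by (simp add: power_sum[symmetric])
  also have "(\<Sum>u\<in>set xs. count_list xs u - 1) = length xs - card (set xs)"
    using sum_subtractf_nat[of "set xs" "\<lambda>_. 1" "count_list xs"] pos by (simp add: total)
  finally show "(\<Prod>u\<in>set xs. count_list xs u) ^ 3 \<le> 9 ^ (length xs - card (set xs))" .
qed

lemma le_powr_third_if_cube_le:
  assumes "0 \<le> x" "x ^ 3 \<le> (3::real) ^ n"
  shows "x \<le> 3 powr (real n / 3)"
proof -
  have "(3 powr (real n / 3)) ^ 3 = 3 ^ n"
    by (simp add: powr_realpow[symmetric] powr_powr)
  then show ?thesis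
    using assms power_strict_mono[of "3 powr (real n / 3)" x 3] by force
qed

lemma card_transversals_le_powr:
  "real (card (transversals xs))
    \<le> 3 powr (min (real (length xs)) (2 * real (length xs) - 2 * real (card (set xs))) / 3)"
proof -
  define K where "K = real (card (transversals xs))"
  define p where "p = (\<Prod>u\<in>set xs. count_list xs u)"
  have "K \<le> real p"
    unfolding K_def p_def using card_transversals_le[of xs] by linarith
  then have cube: "K ^ 3 \<le> real p ^ 3"
    by (rule power_mono) (simp add: K_def)
  have "K \<le> 3 powr (real (length xs) / 3)"
  proof (rule le_powr_third_if_cube_le)
    have "real (p ^ 3) \<le> real (3 ^ length xs)"
      unfolding p_def of_nat_le_iff by (rule prod_count_list_cube_le(1))
    then show "K ^ 3 \<le> 3 ^ length xs"
      using cube by simp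
  qed (simp add: K_def)
  moreover have "K \<le> 3 powr (real (2 * (length xs - card (set xs))) / 3)"
  proof (rule le_powr_third_if_cube_le)
    have "real (p ^ 3) \<le> real (9 ^ (length xs - card (set xs)))"
      unfolding p_def of_nat_le_iff by (rule prod_count_list_cube_le(2))
    then show "K ^ 3 \<le> 3 ^ (2 * (length xs - card (set xs)))"
      using cube by (simp add: power_mult)
  qed (simp add: K_def)
  moreover have "real (2 * (length xs - card (set xs))) = 2 * real (length xs) - 2 * real (card (set xs))"
    using card_length[of xs] by simp
  ultimately show ?thesis
    unfolding K_def by (cases "real (length xs) \<le> 2 * real (length xs) - 2 * real (card (set xs))")
      (simp_all add: min_def)
qed

lemma norm_sDisc_le:
  assumes P: "P \<noteq> 0" and r: "r = card {x. poly P x = 0}"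
  shows "cmod (sDisc P (degree P - r)) \<le> cmod (lead_coeff P) ^ (2 * (r - 1))
    * 3 powr (min (real (degree P)) (2 * real (degree P) - 2 * real r) / 3)
    * (\<Prod>(u,v)\<in>{(u,v). poly P u = 0 \<and> poly P v = 0 \<and> u \<noteq> v}. cmod (u - v))"
proof -
  define xs where "xs = root_list P"
  have len: "length xs = degree P" and set: "set xs = {x. poly P x = 0}"
    unfolding xs_def using length_root_list[OF P] set_root_list[OF P] by simp_all
  have r': "r = card (set xs)" "r \<le> degree P"
    using r set len card_length[of xs] by simp_all
  have "sDisc P (degree P - r) = lead_coeff P ^ (2 * (r - 1)) *
    (\<Sum>I\<in>{I. I \<subseteq> {0..<length xs} \<and> card I = card (set xs)}. \<Prod>(i,j)\<in>{(i,j). i\<in>I \<and> j\<in>I \<and> i<j}. (xs!i - xs!j)\<^sup>2)"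
    unfolding sDisc_def Let_def xs_def[symmetric] len r'(1)[symmetric]
    using r'(2) by (simp add: right_diff_distrib')
  then have "cmod (sDisc P (degree P - r)) \<le> cmod (lead_coeff P) ^ (2 * (r - 1)) *
    (real (card (transversals xs)) * (\<Prod>(u,v)\<in>{(u,v). u\<in>set xs \<and> v\<in>set xs \<and> u\<noteq>v}. cmod (u - v)))"
    by (simp add: norm_mult norm_power mult_left_mono norm_sum_subset_discriminants_le)
  also have "\<dots> \<le> cmod (lead_coeff P) ^ (2 * (r - 1))
    * (3 powr (min (real (degree P)) (2 * real (degree P) - 2 * real r) / 3)
       * (\<Prod>(u,v)\<in>{(u,v). u\<in>set xs \<and> v\<in>set xs \<and> u\<noteq>v}. cmod (u - v)))"
    using card_transversals_le_powr[of xs] by (intro mult_left_mono mult_right_mono prod_nonneg) (auto simp: len r')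
  finally show ?thesis
    by (simp add: set mult_ac)
qed

lemma obtain_sorted_enumeration:
  fixes f :: "'a \<Rightarrow> 'b::linorder"
  assumes "finite S"
  obtains w where "inj_on w {..<card S}" "w ` {..<card S} = S"
    "\<And>i j. i \<le> j \<Longrightarrow> j < card S \<Longrightarrow> f (w i) \<le> f (w j)"
proof -
  obtain xs where xs: "set xs = S" "distinct xs"
    using finite_distinct_list[OF assms] by blast
  define L where "L = sort_key f xs"
  have L: "distinct L" "set L = S" "length L = card S" "sorted (map f L)"
    using xs by (simp_all add: L_def distinct_card[symmetric])
  show thesis
  proof (rule that[of "nth L"])
    show "inj_on (nth L) {..<card S}"
      using L by (simp add: inj_on_def nth_eq_iff_index_eq)
    show "nth L ` {..<card S} = S"
      using L by (auto simp: set_conv_nth)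
    show "f (L ! i) \<le> f (L ! j)" if "i \<le> j" "j < card S" for i j
      using sorted_nth_mono[OF L(4), of i j] that L(3) by simp
  qed
qed

lemma sqrt_le_from_estimates:
  fixes D A X M Pi Q t s c :: real and k :: nat
  assumes disc: "D \<le> A ^ (2 * k) * t\<^sup>2 * Pi\<^sup>2"
    and prod: "Pi \<le> Q * X ^ k * s * c"
    and mahler: "A * X \<le> M"
    and pos: "0 < A" "1 \<le> X" "0 < t" "0 < s" "0 < c" "0 \<le> Pi"
  shows "sqrt D \<le> M ^ k * c * s * t * Q"
proof -
  have "0 \<le> Q * (X ^ k * s * c)" and "0 < X ^ k * s * c"
    using prod pos by (simp_all add: mult.assoc)
  then have Q: "0 \<le> Q"
    using zero_le_mult_iff by force
  have "A ^ (2 * k) * t\<^sup>2 * Pi\<^sup>2 = (A ^ k * t * Pi)\<^sup>2"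
    by (simp add: power_mult_distrib power_mult[symmetric] mult.commute[of 2])
  then have "sqrt D \<le> sqrt ((A ^ k * t * Pi)\<^sup>2)"
    using disc by (intro real_sqrt_le_mono) simp
  also have "\<dots> = A ^ k * t * Pi"
    using pos by simp
  also have "\<dots> \<le> A ^ k * t * (Q * X ^ k * s * c)"
    using prod pos by (intro mult_left_mono) simp_all
  also have "\<dots> = (A * X) ^ k * (t * s * c * Q)"
    by (simp add: power_mult_distrib mult_ac)
  also have "\<dots> \<le> M ^ k * (t * s * c * Q)"
    using mahler pos Q by (intro mult_right_mono power_mono) simp_all
  finally show ?thesis
    by (simp add: mult_ac)
qed

lemma powr_minus_of_nat: "0 < x \<Longrightarrow> x powr (- real n) = 1 / x ^ n"
  by (simp only: powr_minus_divide powr_realpow)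

lemma powr_minus_half_self: "0 < n \<Longrightarrow> real n powr (- real n / 2) = 1 / sqrt (real n) ^ n"
proof -
  assume "0 < n"
  then have "real n powr (real n / 2) = sqrt (real n ^ n)"
    by (simp add: powr_half_sqrt_powr powr_realpow)
  then show ?thesis
    by (simp add: real_sqrt_power powr_minus_divide minus_divide_left[symmetric])
qed

lemma lower_bound_from_estimates:
  fixes D A X M Pi Q m :: real and r e :: nat
  assumes disc: "D \<le> A ^ (2 * (r - 1)) * 3 powr (m / 3) * Pi\<^sup>2"
    and prod: "Pi \<le> Q * X ^ (r - 1) * sqrt (real r) ^ r * (real r / sqrt 3) ^ e"
    and mahler: "A * X \<le> M"
    and pos: "0 < A" "1 \<le> X" "1 \<le> r" "0 \<le> Pi"
  shows "sqrt D * M powr (- (real r - 1)) * (real r / sqrt 3) powr (- real e)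
    * real r powr (- real r / 2) * (1 / 3) powr (m / 6) \<le> Q"
proof -
  define t where "t = 3 powr (m / 6)"
  have "t\<^sup>2 = 3 powr (m / 3)"
    by (simp add: t_def power2_eq_square powr_add[symmetric])
  then have bound: "sqrt D \<le> M ^ (r - 1) * (real r / sqrt 3) ^ e * sqrt (real r) ^ r * t * Q"
    using pos disc prod mahler by (intro sqrt_le_from_estimates) (simp_all add: t_def)
  have "A \<le> A * X"
    using pos by simp
  then have "0 < M"
    using pos mahler by linarith
  moreover have "real r - 1 = real (r - 1)"
    using pos by simp
  ultimately have "M powr (- (real r - 1)) = 1 / M ^ (r - 1)"
    by (simp only: powr_minus_of_nat)
  moreover have "(real r / sqrt 3) powr (- real e) = 1 / (real r / sqrt 3) ^ e"
    using pos by (intro powr_minus_of_nat) simp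
  moreover have "real r powr (- real r / 2) = 1 / sqrt (real r) ^ r"
    using pos by (intro powr_minus_half_self) simp
  moreover have "(1 / 3) powr (m / 6) = 1 / t"
    by (simp add: t_def powr_divide)
  ultimately show ?thesis
    using bound pos \<open>0 < M\<close> by (simp add: divide_le_eq mult_ac t_def)
qed

lemma one_le_card_roots:
  fixes P :: "complex poly"
  assumes "1 \<le> degree P"
  shows "1 \<le> card {x. poly P x = 0}"
proof -
  have P: "P \<noteq> 0"
    using assms by auto
  then have "root_list P \<noteq> []"
    using assms length_root_list[OF P] by auto
  then have "{x. poly P x = 0} \<noteq> {}"
    unfolding set_root_list[OF P, symmetric] by simp
  then show ?thesis
    using poly_roots_finite[OF P] by (simp add: Suc_le_eq card_gt_0_iff)
qed

theorem prod_differences_le_edge_lengths: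
  fixes w :: "nat \<Rightarrow> complex" and E :: "complex set set"
  assumes inj: "inj_on w {..<r}"
    and mono: "\<And>i j. i \<le> j \<Longrightarrow> j < r \<Longrightarrow> cmod (w i) \<le> cmod (w j)"
    and V: "V \<subseteq> w ` {..<r}"
    and E: "E \<subseteq> {{u, v} | u v. u \<in> V \<and> v \<in> V \<and> u \<noteq> v}"
  shows "(\<Prod>i<r. \<Prod>l<i. cmod (w i - w l)) \<le> (\<Prod>e\<in>E. edge_length e)
    * (\<Prod>u\<in>w ` {..<r}. max 1 (cmod u)) ^ (r - 1) * sqrt (real r) ^ r * (real r / sqrt 3) ^ card E"
proof -
  have E': "E \<subseteq> {{u, v} | u v. u \<in> w ` {..<r} \<and> v \<in> w ` {..<r} \<and> u \<noteq> v}"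
  proof
    fix e assume "e \<in> E"
    then obtain u v where "e = {u, v}" "u \<in> V" "v \<in> V" "u \<noteq> v"
      using E by blast
    then show "e \<in> {{u, v} | u v. u \<in> w ` {..<r} \<and> v \<in> w ` {..<r} \<and> u \<noteq> v}"
      using V by (intro CollectI exI[of _ u] exI[of _ v]) auto
  qed
  define T where "T = earlier_neighbours w E"
  have T: "distinct (T i) \<and> set (T i) \<subseteq> {..<i}" for i
    by (auto simp: T_def earlier_neighbours_def)
  have "cmod (w j) \<le> cmod (w i)" if "i < r" "j \<in> set (T i)" for i j
    using that T[of i] mono by auto
  then have "(\<Prod>i<r. \<Prod>l<i. cmod (w i - w l))
      \<le> (\<Prod>i<r. \<Prod>j\<leftarrow>T i. cmod (w i - w j)) * (\<Prod>i<r. max 1 (cmod (w i))) ^ (r - 1)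
         * sqrt (real r) ^ r * (real r / sqrt 3) ^ (\<Sum>i<r. length (T i))"
    by (rule prod_differences_le[OF inj T])
  also have "(\<Prod>i<r. max 1 (cmod (w i))) = (\<Prod>u\<in>w ` {..<r}. max 1 (cmod u))"
    using prod.reindex[OF inj, of "\<lambda>u. max 1 (cmod u)"] by simp
  finally show ?thesis
    unfolding T_def prod_edge_length_eq[OF inj E'] card_edges_eq_sum_earlier_neighbours[OF inj E'] .
qed

theorem theorem3:
  fixes P :: "complex poly" and V :: "complex set" and E :: "complex set set"
    and d r :: nat
  assumes "degree P = d" and "d \<ge> 1"
    and "r = card {x. poly P x = 0}"
    and "V \<subseteq> {x. poly P x = 0}"
    and "E \<subseteq> {{u, v} | u v. u \<in> V \<and> v \<in> V \<and> u \<noteq> v}"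
  shows "(\<Prod>e\<in>E. edge_length e) \<ge>
    sqrt (cmod (sDisc P (d - r))) * mahler_measure P powr (- (real r - 1))
    * (real r / sqrt 3) powr (- real (card E)) * real r powr (- real r / 2)
    * (1 / 3) powr (min (real d) (2 * real d - 2 * real r) / 6)"
proof -
  let ?Z = "{x. poly P x = 0}"
  have P: "P \<noteq> 0"
    using assms(1,2) by auto
  have "1 \<le> r"
    using one_le_card_roots[of P] assms(1-3) by simp
  obtain w where inj: "inj_on w {..<r}" and img: "w ` {..<r} = ?Z"
    and mono: "\<And>i j. i \<le> j \<Longrightarrow> j < r \<Longrightarrow> cmod (w i) \<le> cmod (w j)"
    using obtain_sorted_enumeration[OF poly_roots_finite[OF P], of cmod] unfolding assms(3) by blast
  have disc: "cmod (sDisc P (d - r)) \<le> cmod (lead_coeff P) ^ (2 * (r - 1))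
      * 3 powr (min (real d) (2 * real d - 2 * real r) / 3) * (\<Prod>i<r. \<Prod>l<i. cmod (w i - w l))\<^sup>2"
    using norm_sDisc_le[OF P assms(3)]
      prod_distinct_pairs_enumeration[where h = "\<lambda>u v. cmod (u - v)", OF inj norm_minus_commute]
    unfolding img assms(1) by simp
  have differences: "(\<Prod>i<r. \<Prod>l<i. cmod (w i - w l)) \<le> (\<Prod>e\<in>E. edge_length e)
      * (\<Prod>u\<in>?Z. max 1 (cmod u)) ^ (r - 1) * sqrt (real r) ^ r * (real r / sqrt 3) ^ card E"
    by (rule prod_differences_le_edge_lengths[OF inj, of V E, unfolded img]) (use mono assms(4,5) in auto)
  have "0 < cmod (lead_coeff P)" and "1 \<le> (\<Prod>u\<in>?Z. max 1 (cmod u))"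
    and "0 \<le> (\<Prod>i<r. \<Prod>l<i. cmod (w i - w l))"
    using P by (simp_all add: prod_ge_1 prod_nonneg)
  then show ?thesis
    using lower_bound_from_estimates[OF disc differences mahler_measure_ge[OF P]] \<open>1 \<le> r\<close>
    by blast
qed

end
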